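(* Let $\mathcal{G}$ be a directed graph consisting of a single cycle over $k+1$ nodes indexed $0,1,\dots,k$, with edges $\ell_1,\dots,\ell_{k+1}$ where $\ell_i$ joins nodes $i-1$ and $i$ for $i=1,\dots,k$ and $\ell_{k+1}$ joins nodes $k$ and $0$ (each edge carries an arbitrary orientation). Each edge is either a lossy pipe $\ell=(m,n)$ with parameter $a_\ell>0$, or a compressor $\ell=(m,n)$ with ratio $\alpha_\ell>0$; assume at least one edge is a lossy pipe. Let $\mathbf{n}\in\{\pm1\}^{k+1}$ be the cycle indicator vector for the cycle direction $0\to1\to\dots\to k\to 0$: $n_i=+1$ if the orientation of $\ell_i$ agrees with this direction and $n_i=-1$ otherwise. Say a pair $(\boldsymbol{\phi},\boldsymbol{\psi})\in\mathbb{R}^{k+1}\times\mathbb{R}^{k+1}$ is admissible if $\psi_m-\psi_n=a_\ell\,\mathrm{sign}(\phi_\ell)\phi_\ell^2$ for every lossy pipe $\ell=(m,n)$, $\psi_j\ge 0$ for every node $j$, and $\psi_n=\alpha_\ell\psi_m$, $\phi_\ell\ge0$ for every compressor $\ell=(m,n)$. Suppose $(\boldsymbol{\phi},\boldsymbol{\psi})$ and $(\tilde{\boldsymbol{\phi}},\tilde{\boldsymbol{\psi}})$ are admissible with $\psi_0=\tilde{\psi}_0$ and $\tilde{\boldsymbol{\phi}}\neq\boldsymbol{\phi}$. Then it is neither the case that $\mathrm{sign}(\tilde{\boldsymbol{\phi}}-\boldsymbol{\phi})\odot\mathbf{n}<\mathbf{0}$ entrywise, nor the case that $\mathrm{sign}(\tilde{\boldsymbol{\phi}}-\boldsymbol{\phi})\odot\mathbf{n}>\mathbf{0}$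 entrywise.
   Context: $\mathrm{sign}$ is applied entrywise, with $\mathrm{sign}(x)=+1$ for $x>0$, $-1$ for $x<0$, $0$ for $x=0$; $\odot$ denotes entrywise product of vectors. *)

theory Defs
  imports Complex_Main
begin

text \<open>Cycle graph on nodes 0..k with edges indexed 1..k+1.
  Edge i (1 \<le> i \<le> k) joins nodes i-1 and i; edge k+1 joins nodes k and 0.
  The cycle direction 0 -> 1 -> ... -> k -> 0 traverses edge i from
  cyc_src k i to cyc_dst k i.  fwd i says whether the orientation of edge i
  agrees with the cycle direction.\<close>

definition cyc_src :: "nat \<Rightarrow> nat \<Rightarrow> nat" where
  "cyc_src k i = i - 1"

definition cyc_dst :: "nat \<Rightarrow> nat \<Rightarrow> nat" where
  "cyc_dst k i = (if i \<le> k then i else 0)"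

definition tail :: "nat \<Rightarrow> (nat \<Rightarrow> bool) \<Rightarrow> nat \<Rightarrow> nat" where
  "tail k fwd i = (if fwd i then cyc_src k i else cyc_dst k i)"

definition head :: "nat \<Rightarrow> (nat \<Rightarrow> bool) \<Rightarrow> nat \<Rightarrow> nat" where
  "head k fwd i = (if fwd i then cyc_dst k i else cyc_src k i)"

definition cyc_ind :: "(nat \<Rightarrow> bool) \<Rightarrow> nat \<Rightarrow> real" where
  "cyc_ind fwd i = (if fwd i then 1 else -1)"

text \<open>pipe i: edge i is a lossy pipe (parameter c i = a_i), otherwise a
  compressor (ratio c i = alpha_i).  phi indexed by edges 1..k+1,
  psi by nodes 0..k.\<close>
definition admissible ::
  "nat \<Rightarrow> (nat \<Rightarrow> bool) \<Rightarrow> (nat \<Rightarrow> bool) \<Rightarrow> (nat \<Rightarrow> real)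
    \<Rightarrow> (nat \<Rightarrow> real) \<Rightarrow> (nat \<Rightarrow> real) \<Rightarrow> bool" where
  "admissible k fwd pipe c phi psi \<longleftrightarrow>
     (\<forall>i\<in>{1..k+1}. pipe i \<longrightarrow>
        psi (tail k fwd i) - psi (head k fwd i) = c i * sgn (phi i) * (phi i)\<^sup>2) \<and>
     (\<forall>j\<in>{0..k}. psi j \<ge> 0) \<and>
     (\<forall>i\<in>{1..k+1}. \<not> pipe i \<longrightarrow>
        psi (head k fwd i) = c i * psi (tail k fwd i) \<and> phi i \<ge> 0)"

end

theory Submission
  imports Defs
begin

text \<open>Let D = psi' - psi be the difference of the two pressure vectors. If the flow increases
  along the cycle direction on every edge, then walking around the cycle from node 0, D strictly
  decreases across every pipe (the head loss x \<mapsto> a sgn(x) x^2 is strictly increasing) and keeps its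
  sign across every compressor (D is scaled by the ratio). Since D vanishes at node 0, it stays
  nonpositive, becomes negative after the first pipe, and so cannot return to 0 at node 0. The
  opposite sign pattern is the same situation with the two solutions exchanged.\<close>

definition signed_square :: "real \<Rightarrow> real" where
  "signed_square x = sgn x * x\<^sup>2"

lemma signed_square_minus: "signed_square (- x) = - signed_square x"
  by (simp add: signed_square_def)

lemma strict_mono_signed_square: "strict_mono signed_square"
proof (rule strict_monoI)
  fix x y :: real
  assume "x < y"
  consider "0 \<le> x" | "x < 0" "0 \<le> y" | "y < 0" by linarith
  then show "signed_square x < signed_square y"
  proof cases
    case 1
    then have "x\<^sup>2 < y\<^sup>2" using \<open>x < y\<close> by (simp add: power_strict_mono)
    then show ?thesis using 1 \<open>x < y\<close> by (simp add: signed_square_def sgn_if)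
  next
    case 2
    then have "signed_square x = - x\<^sup>2" "0 \<le> signed_square y" "0 < x\<^sup>2"
      by (simp_all add: signed_square_def sgn_if)
    then show ?thesis by linarith
  next
    case 3
    then have "(- y)\<^sup>2 < (- x)\<^sup>2" using \<open>x < y\<close> by (intro power_strict_mono) auto
    then show ?thesis using 3 \<open>x < y\<close> by (simp add: signed_square_def)
  qed
qed

lemma cyc_dst_eq_cyc_src_Suc: "j \<le> k \<Longrightarrow> cyc_dst k j = cyc_src k (Suc j)"
  by (simp add: cyc_dst_def cyc_src_def)

lemma admissible_pipe_drop:
  assumes "admissible k fwd pipe c phi psi" "i \<in> {1..k+1}" "pipe i"
  shows "psi (cyc_src k i) - psi (cyc_dst k i) = c i * signed_square (cyc_ind fwd i * phi i)"
proof (cases "fwd i")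
  case True
  then show ?thesis using assms unfolding admissible_def
    by (auto simp: tail_def head_def cyc_ind_def signed_square_def mult.assoc)
next
  case False
  then have "psi (cyc_dst k i) - psi (cyc_src k i) = c i * signed_square (phi i)"
    using assms unfolding admissible_def
    by (auto simp: tail_def head_def signed_square_def mult.assoc)
  then show ?thesis
    using False by (simp add: cyc_ind_def signed_square_minus)
qed

lemma admissible_compressor_scaling:
  assumes "admissible k fwd pipe c phi psi" "i \<in> {1..k+1}" "\<not> pipe i"
  shows "psi (head k fwd i) = c i * psi (tail k fwd i)"
  using assms by (simp add: admissible_def)

lemma pressure_difference_step:
  assumes adm: "admissible k fwd pipe c phi psi" "admissible k fwd pipe c phi' psi'"
    and i: "i \<in> {1..k+1}" and c: "c i > 0"
    and incr: "sgn (phi' i - phi i) * cyc_ind fwd i > 0"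
  defines "D \<equiv> \<lambda>j. psi' j - psi j"
  shows "pipe i \<Longrightarrow> D (cyc_dst k i) < D (cyc_src k i)"
    and "\<not> pipe i \<Longrightarrow> sgn (D (cyc_dst k i)) = sgn (D (cyc_src k i))"
proof -
  assume "pipe i"
  have "cyc_ind fwd i * phi i < cyc_ind fwd i * phi' i"
    using incr by (auto simp: cyc_ind_def sgn_if split: if_splits)
  then have "signed_square (cyc_ind fwd i * phi i) < signed_square (cyc_ind fwd i * phi' i)"
    by (rule strict_monoD[OF strict_mono_signed_square])
  then have "c i * signed_square (cyc_ind fwd i * phi i)
      < c i * signed_square (cyc_ind fwd i * phi' i)"
    using c by (rule mult_strict_left_mono)
  then show "D (cyc_dst k i) < D (cyc_src k i)"
    using admissible_pipe_drop[OF adm(1) i \<open>pipe i\<close>] admissible_pipe_drop[OF adm(2) i \<open>pipe i\<close>]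
    unfolding D_def by linarith
next
  assume "\<not> pipe i"
  have "D (head k fwd i) = c i * D (tail k fwd i)"
    using admissible_compressor_scaling[OF adm(1) i \<open>\<not> pipe i\<close>]
      admissible_compressor_scaling[OF adm(2) i \<open>\<not> pipe i\<close>]
    unfolding D_def by (simp add: right_diff_distrib)
  then have "sgn (D (head k fwd i)) = sgn (D (tail k fwd i))"
    using c by (simp add: sgn_mult)
  then show "sgn (D (cyc_dst k i)) = sgn (D (cyc_src k i))"
    by (cases "fwd i") (simp_all add: head_def tail_def)
qed

lemma walk_nonpos:
  fixes d :: "nat \<Rightarrow> real"
  assumes step: "\<And>j. j < n \<Longrightarrow> d (Suc j) < d j \<or> sgn (d (Suc j)) = sgn (d j)"
    and "d 0 \<le> 0"
  shows "d n \<le> 0"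
  using assms
proof (induction n)
  case (Suc n)
  then have "d n \<le> 0" by simp
  then show ?case using Suc.prems(1)[of n] by (auto simp: sgn_if split: if_splits)
qed simp

lemma walk_neg_after_strict_step:
  fixes d :: "nat \<Rightarrow> real"
  assumes step: "\<And>j. j < n \<Longrightarrow> d (Suc j) < d j \<or> sgn (d (Suc j)) = sgn (d j)"
    and "d 0 \<le> 0" and "j < n" and "d (Suc j) < d j"
  shows "d n < 0"
  using assms
proof (induction n)
  case (Suc n)
  show ?case
  proof (cases "j = n")
    case True
    have "d n \<le> 0" using walk_nonpos[of n d] Suc.prems(1,2) by simp
    then show ?thesis using True Suc.prems(4) by simp
  next
    case False
    then have "d n < 0" using Suc by simp
    then show ?thesis using Suc.prems(1)[of n] by (auto simp: sgn_if split: if_splits)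
  qed
qed simp

lemma no_increase_around_cycle:
  assumes c: "\<forall>i\<in>{1..k+1}. c i > 0"
    and "\<exists>i\<in>{1..k+1}. pipe i"
    and adm: "admissible k fwd pipe c phi psi" "admissible k fwd pipe c phi' psi'"
    and "psi 0 = psi' 0"
    and incr: "\<forall>i\<in>{1..k+1}. sgn (phi' i - phi i) * cyc_ind fwd i > 0"
  shows False
proof -
  \<comment> \<open>d j is the pressure difference at the j-th node of the walk 0, 1, ..., k, 0.\<close>
  define d where "d j = psi' (cyc_dst k j) - psi (cyc_dst k j)" for j
  have d_end: "d 0 = 0" "d (k+1) = 0"
    using \<open>psi 0 = psi' 0\<close> by (simp_all add: d_def cyc_dst_def)
  have edge: "d (Suc j) = psi' (cyc_dst k (Suc j)) - psi (cyc_dst k (Suc j))"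
    "d j = psi' (cyc_src k (Suc j)) - psi (cyc_src k (Suc j))"
    and "Suc j \<in> {1..k+1}" if "j < k+1" for j
    using that by (simp_all add: d_def cyc_dst_eq_cyc_src_Suc)
  note step = pressure_difference_step[OF adm _ _ bspec[OF incr]]
  have walk: "d (Suc j) < d j \<or> sgn (d (Suc j)) = sgn (d j)" if "j < k+1" for j
    using step[of "Suc j"] edge[OF that] that c by (cases "pipe (Suc j)") auto
  obtain i where "i \<in> {1..k+1}" "pipe i" using \<open>\<exists>i\<in>{1..k+1}. pipe i\<close> by blast
  moreover have "i - 1 < k+1" "Suc (i - 1) = i" using \<open>i \<in> {1..k+1}\<close> by auto
  ultimately have "d (Suc (i - 1)) < d (i - 1)"
    using step(1)[of i] edge[of "i - 1"] c by simp
  then have "d (k+1) < 0"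
    using walk_neg_after_strict_step[of "k+1" d "i - 1", OF walk] d_end \<open>i - 1 < k+1\<close> by simp
  then show False using d_end by simp
qed

theorem lemma2:
  fixes k :: nat
    and fwd pipe :: "nat \<Rightarrow> bool"
    and c :: "nat \<Rightarrow> real"
    and phi psi phi' psi' :: "nat \<Rightarrow> real"
  assumes "\<forall>i\<in>{1..k+1}. c i > 0"
    and "\<exists>i\<in>{1..k+1}. pipe i"
    and "admissible k fwd pipe c phi psi"
    and "admissible k fwd pipe c phi' psi'"
    and "psi 0 = psi' 0"
    and "\<exists>i\<in>{1..k+1}. phi' i \<noteq> phi i"
  shows "\<not> (\<forall>i\<in>{1..k+1}. sgn (phi' i - phi i) * cyc_ind fwd i < 0) \<and>
         \<not> (\<forall>i\<in>{1..k+1}. sgn (phi' i - phi i) * cyc_ind fwd i > 0)"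
proof
  have "sgn (phi i - phi' i) = - sgn (phi' i - phi i)" for i
    by (metis minus_diff_eq sgn_minus)
  then have "(\<forall>i\<in>{1..k+1}. sgn (phi' i - phi i) * cyc_ind fwd i < 0) \<longleftrightarrow>
      (\<forall>i\<in>{1..k+1}. sgn (phi i - phi' i) * cyc_ind fwd i > 0)"
    by simp
  then show "\<not> (\<forall>i\<in>{1..k+1}. sgn (phi' i - phi i) * cyc_ind fwd i < 0)"
    using no_increase_around_cycle[OF assms(1,2,4,3)] assms(5) by auto
  show "\<not> (\<forall>i\<in>{1..k+1}. sgn (phi' i - phi i) * cyc_ind fwd i > 0)"
    using no_increase_around_cycle[OF assms(1-5)] by blast
qed

end
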